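(* Let $\lambda>0$ and let $f$ be analytic in $\mathbb{D}=\{z:|z|<1\}$ with $f(0)=0$, $f'(0)=1$. If $|f''(z)|\le2\lambda$ for all $z\in\mathbb{D}$, then $f\in\Omega_\lambda$. The number $2\lambda$ is best possible.
   Context: $\Omega_\lambda$ denotes the set of functions $f$ analytic in $\mathbb{D}$ with $f(0)=0$, $f'(0)=1$, such that $zf'(z)-f(z)=\lambda z^2\phi(z)$ for some analytic $\phi$ on $\mathbb{D}$ with $|\phi(z)|\le1$. *)

theory Defs
  imports "HOL-Complex_Analysis.Complex_Analysis"
begin

definition Omega :: "real \<Rightarrow> (complex \<Rightarrow> complex) set" where
  "Omega lam = {f. f holomorphic_on ball 0 1 \<and> f 0 = 0 \<and> deriv f 0 = 1 \<and>
     (\<exists>\<phi>. \<phi> holomorphic_on ball 0 1 \<and> (\<forall>z\<in>ball 0 1. norm (\<phi> z) \<le> 1) \<and>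
        (\<forall>z\<in>ball 0 1. z * deriv f z - f z = of_real lam * z^2 * \<phi> z))}"

end

theory Submission
  imports Defs
begin

text \<open>With \<open>g(z) = z f'(z) - f(z)\<close> we have \<open>g(0) = g'(0) = 0\<close> and \<open>g'(z) = z f''(z)\<close>, so integrating
  along the radius gives \<open>|g(z)| \<le> \<lambda> |z|\<^sup>2\<close>. Hence \<open>\<phi> = g / (\<lambda> z\<^sup>2)\<close> has a removable singularity
  at \<open>0\<close> and is bounded by \<open>1\<close>. For sharpness, \<open>f(z) = z + a z\<^sup>2\<close> has \<open>|f''| = 2|a|\<close> and
  \<open>z f'(z) - f(z) = a z\<^sup>2\<close>, which forces \<open>|a| \<le> \<lambda>\<close> for \<open>f \<in> \<Omega>\<^sub>\<lambda>\<close>.\<close>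

lemma of_real_mult_mem_convex:
  assumes "convex S" "0 \<in> S" "z \<in> S" "t \<in> {0..1}"
  shows "of_real t * z \<in> S"
  using convexD_alt[OF assms(1-3), of t] assms(4) by (simp add: scaleR_conv_of_real)

lemma has_integral_radial_derivative:
  fixes g g' :: "complex \<Rightarrow> complex"
  assumes S: "convex S" "0 \<in> S" and z: "z \<in> S"
    and dg: "\<And>w. w \<in> S \<Longrightarrow> (g has_field_derivative g' w) (at w)"
  shows "((\<lambda>t. z * g' (of_real t * z)) has_integral g z - g 0) {0..1}"
proof -
  have "((\<lambda>t. z * g' (of_real t * z)) has_integral g (of_real 1 * z) - g (of_real 0 * z)) {0..1}"
  proof (rule fundamental_theorem_of_calculus)
    fix t :: real assume t: "t \<in> {0..1}"
    have "((\<lambda>t. of_real t * z) has_vector_derivative z) (at t within {0..1})"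
      by (auto intro!: derivative_eq_intros simp: has_vector_derivative_def scaleR_conv_of_real)
    moreover have "(g has_field_derivative g' (of_real t * z))
        (at (of_real t * z) within (\<lambda>t. of_real t * z) ` {0..1})"
      using dg[OF of_real_mult_mem_convex[OF S z t]] by (rule has_field_derivative_at_within)
    ultimately have "((g \<circ> (\<lambda>t. of_real t * z)) has_vector_derivative z * g' (of_real t * z))
        (at t within {0..1})"
      by (rule field_vector_diff_chain_within)
    then show "((\<lambda>t. g (of_real t * z)) has_vector_derivative z * g' (of_real t * z))
        (at t within {0..1})"
      by (simp add: o_def)
  qed simp
  then show ?thesis by simp
qed

lemma norm_le_square_of_deriv_bound:
  fixes g h :: "complex \<Rightarrow> complex"
  assumes S: "convex S" "0 \<in> S" and z: "z \<in> S"
    and dg: "\<And>w. w \<in> S \<Longrightarrow> (g has_field_derivative w * h w) (at w)"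
    and hb: "\<And>w. w \<in> S \<Longrightarrow> norm (h w) \<le> M"
  shows "norm (g z - g 0) \<le> M / 2 * norm z ^ 2"
proof -
  define F where "F t = z * (of_real t * z * h (of_real t * z))" for t :: real
  have F: "(F has_integral g z - g 0) {0..1}"
    unfolding F_def using has_integral_radial_derivative[OF S z dg] .
  have "((\<lambda>t. M * norm z ^ 2 * t) has_integral
      M / 2 * norm z ^ 2 * 1\<^sup>2 - M / 2 * norm z ^ 2 * 0\<^sup>2) {0..1}"
    by (rule fundamental_theorem_of_calculus)
       (auto intro!: derivative_eq_intros simp: has_real_derivative_iff_has_vector_derivative[symmetric])
  then have majorant: "((\<lambda>t. M * norm z ^ 2 * t) has_integral M / 2 * norm z ^ 2) {0..1}"
    by simp
  have "norm (integral {0..1} F) \<le> integral {0..1} (\<lambda>t. M * norm z ^ 2 * t)"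
  proof (rule integral_norm_bound_integral)
    fix t :: real assume t: "t \<in> {0..1}"
    have "norm z * (t * norm z) * norm (h (of_real t * z)) \<le> norm z * (t * norm z) * M"
      using t hb[OF of_real_mult_mem_convex[OF S z t]] by (intro mult_left_mono) auto
    then show "norm (F t) \<le> M * norm z ^ 2 * t"
      using t by (simp add: F_def norm_mult power2_eq_square algebra_simps)
  qed (use F majorant in blast)+
  then show ?thesis using F majorant by (simp add: integral_unique)
qed

lemma holomorphic_factor_double_zero:
  assumes holg: "g holomorphic_on S" and S: "open S" "0 \<in> S"
    and g0: "g 0 = 0" and dg0: "deriv g 0 = 0"
  obtains q where "q holomorphic_on S" "\<And>z. z \<in> S \<Longrightarrow> g z = z\<^sup>2 * q z"
proof
  define g1 where "g1 z = (if z = 0 then deriv g 0 else (g z - g 0) / (z - 0))" for z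
  have "g1 holomorphic_on S"
    unfolding g1_def by (rule pole_lemma[OF holg]) (simp add: interior_open S)
  then show "(\<lambda>z. if z = 0 then deriv g1 0 else (g1 z - g1 0) / (z - 0)) holomorphic_on S"
    by (rule pole_lemma) (simp add: interior_open S)
  show "g z = z\<^sup>2 * (if z = 0 then deriv g1 0 else (g1 z - g1 0) / (z - 0))" for z
    by (simp add: g1_def g0 dg0 power2_eq_square)
qed

lemma norm_le_at_point_by_continuity:
  fixes q :: "'a::{metric_space,perfect_space} \<Rightarrow> 'b::real_normed_vector"
  assumes "continuous_on S q" "open S" "a \<in> S"
    and bound: "\<And>z. z \<in> S \<Longrightarrow> z \<noteq> a \<Longrightarrow> norm (q z) \<le> B"
  shows "norm (q a) \<le> B"
proof (rule tendsto_upperbound)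
  have "isCont q a"
    using assms(1-3) continuous_on_eq_continuous_at by blast
  then show "((\<lambda>z. norm (q z)) \<longlongrightarrow> norm (q a)) (at a)"
    by (intro tendsto_norm isContD)
  show "\<forall>\<^sub>F z in at a. norm (q z) \<le> B"
    using eventually_at_in_open[OF assms(2,3)] by eventually_elim (auto intro: bound)
qed simp

lemma has_field_derivative_mult_deriv_minus:
  assumes holf: "f holomorphic_on S" and "open S" "w \<in> S"
  shows "((\<lambda>z. z * deriv f z - f z) has_field_derivative w * deriv (deriv f) w) (at w)"
proof -
  have "deriv f holomorphic_on S"
    using holf \<open>open S\<close> by (rule holomorphic_deriv)
  then have "((\<lambda>z. z * deriv f z - f z) has_field_derivative
      (1 * deriv f w + deriv (deriv f) w * w) - deriv f w) (at w)"
    using assms by (intro DERIV_diff DERIV_mult DERIV_ident holomorphic_derivI)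
  then show ?thesis by (simp add: mult.commute)
qed

lemma Omega_if_second_deriv_bound:
  assumes "lam > 0" and holf: "f holomorphic_on ball 0 1" and f0: "f 0 = 0" and "deriv f 0 = 1"
    and f2: "\<And>z. z \<in> ball 0 1 \<Longrightarrow> norm (deriv (deriv f) z) \<le> 2 * lam"
  shows "f \<in> Omega lam"
proof -
  define g where "g z = z * deriv f z - f z" for z
  have dg: "(g has_field_derivative w * deriv (deriv f) w) (at w)" if "w \<in> ball 0 1" for w
    unfolding g_def using has_field_derivative_mult_deriv_minus[OF holf _ that] by simp
  have holg: "g holomorphic_on ball 0 1"
    unfolding g_def using holf by (auto intro!: holomorphic_intros holomorphic_deriv)
  have g0: "g 0 = 0" and dg0: "deriv g 0 = 0"
    using f0 DERIV_imp_deriv[OF dg[of 0]] by (auto simp: g_def)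
  obtain q where holq: "q holomorphic_on ball 0 1"
    and gq: "\<And>z. z \<in> ball 0 1 \<Longrightarrow> g z = z\<^sup>2 * q z"
    using holomorphic_factor_double_zero[OF holg _ _ g0 dg0] by auto
  have q_punctured: "norm (q z) \<le> lam" if "z \<in> ball 0 1" "z \<noteq> 0" for z
  proof -
    have "norm (g z - g 0) \<le> 2 * lam / 2 * norm z ^ 2"
      using norm_le_square_of_deriv_bound[OF convex_ball _ that(1) dg f2] by simp
    then have "norm z ^ 2 * norm (q z) \<le> norm z ^ 2 * lam"
      using gq[OF that(1)] g0 by (simp add: norm_mult norm_power mult.commute)
    then show ?thesis
      using that(2) by (simp add: mult_le_cancel_left_pos)
  qed
  have qb: "norm (q z) \<le> lam" if "z \<in> ball 0 1" for z
  proof (cases "z = 0")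
    case True
    show ?thesis
      using norm_le_at_point_by_continuity[OF holomorphic_on_imp_continuous_on[OF holq] open_ball]
        q_punctured True by simp
  qed (use q_punctured that in blast)
  define \<phi> where "\<phi> z = q z / of_real lam" for z
  have "\<phi> holomorphic_on ball 0 1"
    unfolding \<phi>_def using holq \<open>lam > 0\<close> by (intro holomorphic_intros) auto
  moreover have "\<forall>z\<in>ball 0 1. norm (\<phi> z) \<le> 1"
    using qb \<open>lam > 0\<close> by (simp add: \<phi>_def norm_divide)
  moreover have "\<forall>z\<in>ball 0 1. z * deriv f z - f z = of_real lam * z\<^sup>2 * \<phi> z"
    using gq \<open>lam > 0\<close> by (simp add: \<phi>_def g_def)
  ultimately show ?thesis
    using assms unfolding Omega_def by blast
qed

lemma quadratic_not_in_Omega: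
  assumes "norm a > \<bar>lam\<bar>"
  shows "(\<lambda>z. z + a * z\<^sup>2) \<notin> Omega lam"
proof
  assume "(\<lambda>z. z + a * z\<^sup>2) \<in> Omega lam"
  then obtain \<phi> where \<phi>b: "\<forall>z\<in>ball 0 1. norm (\<phi> z) \<le> 1"
    and eq: "\<forall>z\<in>ball 0 1.
      z * deriv (\<lambda>z. z + a * z\<^sup>2) z - (z + a * z\<^sup>2) = of_real lam * z\<^sup>2 * \<phi> z"
    unfolding Omega_def mem_Collect_eq by (elim conjE exE)
  have half: "1/2 \<in> ball (0::complex) 1"
    by simp
  have "deriv (\<lambda>z. z + a * z\<^sup>2) (1/2) = 1 + a"
    by (rule DERIV_imp_deriv) (auto intro!: derivative_eq_intros)
  with bspec[OF eq half] have "a = of_real lam * \<phi> (1/2)"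
    by (simp add: power2_eq_square field_simps)
  then have "norm a \<le> \<bar>lam\<bar>"
    using bspec[OF \<phi>b half] by (simp add: norm_mult mult_left_le)
  with assms show False by linarith
qed

theorem theorem4p3:
  fixes lam :: real
  assumes "lam > 0"
  shows "(\<forall>f. f holomorphic_on ball 0 1 \<and> f 0 = 0 \<and> deriv f 0 = 1 \<and>
            (\<forall>z\<in>ball 0 1. norm (deriv (deriv f) z) \<le> 2 * lam) \<longrightarrow> f \<in> Omega lam)
       \<and> (\<forall>c > 2 * lam. \<exists>f. f holomorphic_on ball 0 1 \<and> f 0 = 0 \<and> deriv f 0 = 1 \<and>
            (\<forall>z\<in>ball 0 1. norm (deriv (deriv f) z) \<le> c) \<and> f \<notin> Omega lam)"
proof (intro conjI allI impI)
  show "f \<in> Omega lam" if "f holomorphic_on ball 0 1 \<and> f 0 = 0 \<and> deriv f 0 = 1 \<and>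
      (\<forall>z\<in>ball 0 1. norm (deriv (deriv f) z) \<le> 2 * lam)" for f
    using Omega_if_second_deriv_bound[OF assms] that by blast
next
  fix c :: real assume c: "c > 2 * lam"
  define a where "a = complex_of_real (c / 2)"
  have f': "deriv (\<lambda>z. z + a * z\<^sup>2) = (\<lambda>z. 1 + 2 * a * z)"
    by (rule ext, rule DERIV_imp_deriv) (auto intro!: derivative_eq_intros)
  have f'': "deriv (\<lambda>z. 1 + 2 * a * z) = (\<lambda>z. 2 * a)"
    by (rule ext, rule DERIV_imp_deriv) (auto intro!: derivative_eq_intros)
  have "norm a > \<bar>lam\<bar>" "norm (2 * a) = c"
    using c assms by (auto simp: a_def norm_mult)
  then show "\<exists>f. f holomorphic_on ball 0 1 \<and> f 0 = 0 \<and> deriv f 0 = 1 \<and>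
      (\<forall>z\<in>ball 0 1. norm (deriv (deriv f) z) \<le> c) \<and> f \<notin> Omega lam"
    by (intro exI[of _ "\<lambda>z. z + a * z\<^sup>2"])
       (auto simp: f' f'' quadratic_not_in_Omega intro!: holomorphic_intros)
qed

end
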